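(* Let $\mu$ be a probability measure on $\mathbb{R}$ satisfying the standing assumptions below and $\int_{\mathbb{R}}|x|\,d\mu<+\infty$, and let $I$ be its support interval. Let $k\in\mathbb{N}$ and let $\vec v=(v_1,\dots,v_k)\in(0,1)^k$ be a percentile vector. Let $\vec X_n$ be a vector of $n$ i.i.d. random variables with law $\mu$. Then $\mathbb{E}[SC_{\vec v}(\vec X_n)]\to W_1(\mu,\nu_{Q_{\vec v}})$ as $n\to\infty$, where \[ \nu_{Q_{\vec v}}=\sum_{i=1}^k\big(F_\mu(z_i)-F_\mu(z_{i-1})\big)\,\delta_{F_\mu^{[-1]}(v_i)}, \] with $z_i=\frac{F_\mu^{[-1]}(v_i)+F_\mu^{[-1]}(v_{i+1})}{2}$ for $i=1,\dots,k-1$, $z_0=\inf_{x\in I}x$ and $z_k=\sup_{x\in I}x$.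
   Context: For $\vec x\in\mathbb{R}^n$ and $\vec y\in\mathbb{R}^k$, $SC(\vec x,\vec y)=\frac1n\sum_{i=1}^n\min_{j\in[k]}|x_i-y_j|$. A percentile vector is $\vec v=(v_1,\dots,v_k)$ with $0\le v_1\le\dots\le v_k\le1$; the percentile mechanism $\mathcal{PM}_{\vec v}$ sorts the reports as $x_{(1)}\le\dots\le x_{(n)}$ and places facility $j$ at $x_{(\lfloor (n-1)v_j\rfloor+1)}$; $SC_{\vec v}(\vec x)$ denotes the Social Cost of the output of $\mathcal{PM}_{\vec v}$ on $\vec x$. $W_1(\alpha,\beta)=\min_{\pi\in\Pi(\alpha,\beta)}\int|x-y|\,d\pi$ is the 1-Wasserstein distance. $F_\mu$ is the c.d.f. of $\mu$ and $F_\mu^{[-1]}(t)=\inf\{x:F_\mu(x)\ge t\}$ its pseudo-inverse on $(0,1)$. Standing assumptions on $\mu$: absolutely continuous with density $\rho_\mu$; support an interval (bounded or not) on whose interior $\rho_\mu>0$; $\rho_\mu$ differentiable on the support. *)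

theory Defs
  imports "HOL-Probability.Probability"
begin

definition SC :: "nat \<Rightarrow> (nat \<Rightarrow> real) \<Rightarrow> nat \<Rightarrow> (nat \<Rightarrow> real) \<Rightarrow> real" where
  "SC n x k y = (1 / real n) * (\<Sum>i<n. Min ((\<lambda>j. \<bar>x i - y j\<bar>) ` {..<k}))"

text \<open>Percentile mechanism: facility j (0-based) is placed at the
 (floor((n-1) v_j) + 1)-th smallest report, i.e. 0-based index floor((n-1) v_j)
 of the sorted list of reports.\<close>
definition PM :: "nat \<Rightarrow> (nat \<Rightarrow> real) \<Rightarrow> (nat \<Rightarrow> real) \<Rightarrow> nat \<Rightarrow> real" where
  "PM n v x j = sort (map x [0..<n]) ! nat \<lfloor>(real n - 1) * v j\<rfloor>"

definition SC_pm :: "nat \<Rightarrow> (nat \<Rightarrow> real) \<Rightarrow> nat \<Rightarrow> (nat \<Rightarrow> real) \<Rightarrow> real" where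
  "SC_pm k v n x = SC n x k (PM n v x)"

definition couplings :: "real measure \<Rightarrow> real measure \<Rightarrow> (real \<times> real) measure set" where
  "couplings \<alpha> \<beta> = {\<pi>. sets \<pi> = sets (borel \<Otimes>\<^sub>M borel) \<and>
       distr \<pi> borel fst = \<alpha> \<and> distr \<pi> borel snd = \<beta>}"

definition W1 :: "real measure \<Rightarrow> real measure \<Rightarrow> ennreal" where
  "W1 \<alpha> \<beta> = (INF \<pi>\<in>couplings \<alpha> \<beta>. \<integral>\<^sup>+ p. ennreal \<bar>fst p - snd p\<bar> \<partial>\<pi>)"

definition cdf :: "real measure \<Rightarrow> real \<Rightarrow> real" where
  "cdf \<mu> x = measure \<mu> {..x}"

definition cdf_inv :: "real measure \<Rightarrow> real \<Rightarrow> real" where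
  "cdf_inv \<mu> t = Inf {x. cdf \<mu> x \<ge> t}"

text \<open>With 0-based indices, atom i (i<k) sits at
 q_i = F^{-1}(v_i) and has mass F(z_{i+1}) - F(z_i), where z_i = (q_{i-1}+q_i)/2 for
 0<i<k, F(z_0) = 0 (z_0 = inf I) and F(z_k) = 1 (z_k = sup I).\<close>
definition zF :: "real measure \<Rightarrow> nat \<Rightarrow> (nat \<Rightarrow> real) \<Rightarrow> nat \<Rightarrow> real" where
  "zF \<mu> k v i = (if i = 0 then 0 else if i \<ge> k then 1
      else cdf \<mu> ((cdf_inv \<mu> (v (i - 1)) + cdf_inv \<mu> (v i)) / 2))"

definition nuQ :: "real measure \<Rightarrow> nat \<Rightarrow> (nat \<Rightarrow> real) \<Rightarrow> real measure" where
  "nuQ \<mu> k v = distr (point_measure {..<k} (\<lambda>i. ennreal (zF \<mu> k v (Suc i) - zF \<mu> k v i)))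
      borel (\<lambda>i. cdf_inv \<mu> (v i))"

end

theory Submission
  imports Defs
begin

text \<open>
  Facility \<open>j\<close> of the percentile mechanism is the sample order statistic of rank
  \<open>\<lfloor>(n - 1) v\<^sub>j\<rfloor>\<close>. As the density is positive on the support interval,
  \<open>q\<^sub>j = F\<^sup>-\<^sup>1(v\<^sub>j)\<close> is the unique \<open>v\<^sub>j\<close>-quantile, so Hoeffding's inequality for the
  empirical c.d.f. at \<open>q\<^sub>j \<plusminus> \<delta>\<close> makes the order statistic converge to \<open>q\<^sub>j\<close> in
  probability; since its rank stays a fixed fraction away from both ends of the sample, it is
  dominated by a multiple of the sample mean of \<open>\<bar>X\<^sub>i\<bar>\<close>, and the convergence holds in
  mean. The social cost differs from the sample mean of \<open>d(X\<^sub>i)\<close>, where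
  \<open>d(x) = min\<^sub>j \<bar>x - q\<^sub>j\<bar>\<close>, by at most \<open>\<Sum>\<^sub>j \<bar>PM\<^sub>j - q\<^sub>j\<bar>\<close>, so its expectation
  tends to \<open>\<integral> d d\<mu>\<close>. Finally, sending every point to a nearest \<open>q\<^sub>j\<close> (the cells
  are delimited by the midpoints \<open>z\<^sub>i\<close>) pushes \<open>\<mu>\<close> forward to \<open>\<nu>\<^sub>Q\<close>, and
  it is an optimal plan, so \<open>W\<^sub>1(\<mu>, \<nu>\<^sub>Q) = \<integral> d d\<mu>\<close>.
\<close>

section \<open>Order statistics\<close>

lemma sorted_nth_le_iff_length_filter:
  fixes s :: "'a::linorder list"
  assumes "sorted s" and "m < length s"
  shows "s ! m \<le> a \<longleftrightarrow> m < length (filter (\<lambda>y. y \<le> a) s)"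
proof -
  have count: "length (filter (\<lambda>y. y \<le> a) s) = card {j. j < length s \<and> s ! j \<le> a}"
    by (rule length_filter_conv_card)
  show ?thesis
  proof
    assume "s ! m \<le> a"
    then have "{..m} \<subseteq> {j. j < length s \<and> s ! j \<le> a}"
      using assms by (auto intro: order_trans[OF sorted_nth_mono])
    from card_mono[OF _ this] show "m < length (filter (\<lambda>y. y \<le> a) s)"
      unfolding count by simp
  next
    assume m: "m < length (filter (\<lambda>y. y \<le> a) s)"
    show "s ! m \<le> a"
    proof (rule ccontr)
      assume "\<not> s ! m \<le> a"
      then have "{j. j < length s \<and> s ! j \<le> a} \<subseteq> {..<m}"
        using assms by (auto simp: not_less[symmetric] dest: sorted_nth_mono[of s m])
      from card_mono[OF _ this] show False
        using m unfolding count by simp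
    qed
  qed
qed

lemma sort_nth_le_iff_card:
  fixes x :: "nat \<Rightarrow> 'a::linorder"
  assumes "m < n"
  shows "sort (map x [0..<n]) ! m \<le> a \<longleftrightarrow> m < card {i. i < n \<and> x i \<le> a}"
proof -
  have "length (filter (\<lambda>y. y \<le> a) (sort (map x [0..<n])))
      = length (filter (\<lambda>y. y \<le> a) (map x [0..<n]))"
    by (metis mset_filter mset_sort size_mset)
  also have "\<dots> = card {i. i < n \<and> x i \<le> a}"
    by (simp add: length_filter_conv_card cong: conj_cong)
  finally show ?thesis
    using sorted_nth_le_iff_length_filter[of "sort (map x [0..<n])" m a] assms by simp
qed

lemma card_le_eq_sum_indicator:
  fixes x :: "nat \<Rightarrow> real"
  shows "real (card {i. i < n \<and> x i \<le> a}) = (\<Sum>i<n. indicator {..a} (x i))"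
proof -
  have "{i. i < n \<and> x i \<le> a} = {..<n} \<inter> {i. x i \<le> a}" by auto
  then show ?thesis
    by (simp add: indicator_def sum.If_cases)
qed

lemma abs_sort_nth_mult_le_sum_abs:
  fixes x :: "nat \<Rightarrow> real"
  assumes m: "m < n"
  shows "\<bar>sort (map x [0..<n]) ! m\<bar> * real (min (m + 1) (n - m)) \<le> (\<Sum>i<n. \<bar>x i\<bar>)"
proof -
  let ?s = "sort (map x [0..<n])"
  have "(\<Sum>j<n. \<bar>?s ! j\<bar>) = sum_list (map abs ?s)"
    by (simp add: sum_list_sum_nth atLeast0LessThan)
  also have "\<dots> = sum_list (map abs (map x [0..<n]))"
    by (metis mset_map mset_sort sum_mset_sum_list)
  also have "\<dots> = (\<Sum>i<n. \<bar>x i\<bar>)"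
    by (simp add: sum_list_sum_nth atLeast0LessThan)
  finally have sum_sorted: "(\<Sum>j<n. \<bar>?s ! j\<bar>) = (\<Sum>i<n. \<bar>x i\<bar>)" .
  have mono: "?s ! i \<le> ?s ! j" if "i \<le> j" "j < n" for i j
    using that by (intro sorted_nth_mono) auto
  show ?thesis
  proof (cases "?s ! m \<ge> 0")
    case True
    have "\<bar>?s ! m\<bar> * real (min (m + 1) (n - m)) \<le> (\<Sum>j\<in>{m..<n}. \<bar>?s ! m\<bar>)"
      by (auto intro!: mult_right_mono simp: mult.commute)
    also have "\<dots> \<le> (\<Sum>j\<in>{m..<n}. \<bar>?s ! j\<bar>)"
      using True mono by (intro sum_mono) fastforce
    also have "\<dots> \<le> (\<Sum>j<n. \<bar>?s ! j\<bar>)"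
      by (intro sum_mono2) auto
    finally show ?thesis using sum_sorted by simp
  next
    case False
    have "\<bar>?s ! m\<bar> * real (min (m + 1) (n - m)) \<le> (\<Sum>j\<in>{..m}. \<bar>?s ! m\<bar>)"
      by (auto intro!: mult_right_mono simp: mult.commute)
    also have "\<dots> \<le> (\<Sum>j\<in>{..m}. \<bar>?s ! j\<bar>)"
      using False mono m by (intro sum_mono) fastforce
    also have "\<dots> \<le> (\<Sum>j<n. \<bar>?s ! j\<bar>)"
      using m by (intro sum_mono2) auto
    finally show ?thesis using sum_sorted by simp
  qed
qed

section \<open>Independent samples\<close>

abbreviation samples :: "'a measure \<Rightarrow> nat \<Rightarrow> (nat \<Rightarrow> 'a) measure" where
  "samples M n \<equiv> PiM {..<n} (\<lambda>_. M)"

lemma measurable_sort_nth: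
  assumes "sets M = sets (borel :: real measure)" and "m < n"
  shows "(\<lambda>x. sort (map x [0..<n]) ! m) \<in> borel_measurable (samples M n)"
proof (subst borel_measurable_iff_le, intro allI)
  fix a
  have [measurable]: "{..a} \<in> sets M" using assms by simp
  have "{x \<in> space (samples M n). sort (map x [0..<n]) ! m \<le> a}
      = {x \<in> space (samples M n). real m < (\<Sum>i<n. indicator {..a} (x i))}"
    using assms by (simp add: sort_nth_le_iff_card card_le_eq_sum_indicator[symmetric])
  also have "\<dots> \<in> sets (samples M n)" by measurable
  finally show "{x \<in> space (samples M n). sort (map x [0..<n]) ! m \<le> a}
      \<in> sets (samples M n)" .
qed

lemma indep_vars_PiM_coordinates:
  assumes "prob_space M"
  shows "prob_space.indep_vars (PiM I (\<lambda>_. M)) (\<lambda>_. M) (\<lambda>i x. x i) I"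
proof -
  interpret P: prob_space "PiM I (\<lambda>_. M)"
    by (intro prob_space_PiM assms)
  show ?thesis
  proof (cases "I = {}")
    case True
    then show ?thesis unfolding P.indep_vars_def P.indep_sets_def by simp
  next
    case False
    have "(\<Pi>\<^sub>M i\<in>I. distr (PiM I (\<lambda>_. M)) M (\<lambda>x. x i)) = PiM I (\<lambda>_. M)"
      using distr_PiM_component[of I "\<lambda>_. M"] assms by (intro PiM_cong) simp_all
    moreover have "distr (PiM I (\<lambda>_. M)) (PiM I (\<lambda>_. M)) (\<lambda>x. restrict x I) = PiM I (\<lambda>_. M)"
      by (subst distr_cong[of _ _ _ _ _ "\<lambda>x. x"]) (auto simp: space_PiM)
    ultimately show ?thesis
      by (subst P.indep_vars_iff_distr_eq_PiM'[OF False]) simp_all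
  qed
qed

lemma
  fixes f :: "'a \<Rightarrow> 'b::{banach, second_countable_topology}"
  assumes "prob_space M" and "i \<in> I" and "f \<in> borel_measurable M"
  shows integral_PiM_coordinate: "(\<integral>x. f (x i) \<partial>PiM I (\<lambda>_. M)) = (\<integral>x. f x \<partial>M)"
    and integrable_PiM_coordinate_iff: "integrable (PiM I (\<lambda>_. M)) (\<lambda>x. f (x i)) \<longleftrightarrow> integrable M f"
proof -
  have coord: "(\<lambda>x. x i) \<in> measurable (PiM I (\<lambda>_. M)) M"
    using assms(2) by (rule measurable_component_singleton)
  have distr: "distr (PiM I (\<lambda>_. M)) M (\<lambda>x. x i) = M"
    using distr_PiM_component[of I "\<lambda>_. M"] assms(1,2) by simp
  show "(\<integral>x. f (x i) \<partial>PiM I (\<lambda>_. M)) = (\<integral>x. f x \<partial>M)"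
    using integral_distr[OF coord assms(3)] by (simp add: distr)
  show "integrable (PiM I (\<lambda>_. M)) (\<lambda>x. f (x i)) \<longleftrightarrow> integrable M f"
    using integrable_distr_eq[OF coord assms(3)] by (simp add: distr)
qed

lemma
  assumes M: "prob_space M" and A: "A \<in> sets M" and n: "n > 0" and \<epsilon>: "\<epsilon> \<ge> 0"
  shows Hoeffding_sample_count_le:
      "measure (samples M n) {x \<in> space (samples M n).
          (\<Sum>i<n. indicator A (x i)) \<le> real n * measure M A - \<epsilon>} \<le> exp (- 2 * \<epsilon>\<^sup>2 / n)"
    and Hoeffding_sample_count_ge:
      "measure (samples M n) {x \<in> space (samples M n).
          (\<Sum>i<n. indicator A (x i)) \<ge> real n * measure M A + \<epsilon>} \<le> exp (- 2 * \<epsilon>\<^sup>2 / n)"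
proof -
  interpret P: prob_space "samples M n"
    by (intro prob_space_PiM M)
  have mean: "P.expectation (\<lambda>x. indicator A (x i)) = measure M A" if "i < n" for i
    using that M A by (subst integral_PiM_coordinate) auto
  interpret H: Hoeffding_ineq "samples M n" "{..<n}" "\<lambda>i x. indicator A (x i) :: real"
      "\<lambda>_. 0" "\<lambda>_. 1" "real n * measure M A"
  proof unfold_locales
    show "P.indep_vars (\<lambda>_. borel) (\<lambda>i x. indicator A (x i) :: real) {..<n}"
      using A by (intro P.indep_vars_compose2[OF indep_vars_PiM_coordinates[OF M]]) auto
    show "real n * measure M A \<equiv> (\<Sum>i<n. P.expectation (\<lambda>x. indicator A (x i)))"
      using mean by simp
  qed (auto simp: indicator_def)
  have "(\<Sum>i<n. ((\<lambda>_. 1::real) i - (\<lambda>_. 0) i)\<^sup>2) = real n" by simp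
  then show "measure (samples M n) {x \<in> space (samples M n).
          (\<Sum>i<n. indicator A (x i)) \<le> real n * measure M A - \<epsilon>} \<le> exp (- 2 * \<epsilon>\<^sup>2 / n)"
    and "measure (samples M n) {x \<in> space (samples M n).
          (\<Sum>i<n. indicator A (x i)) \<ge> real n * measure M A + \<epsilon>} \<le> exp (- 2 * \<epsilon>\<^sup>2 / n)"
    using H.Hoeffding_ineq_le[OF \<epsilon>] H.Hoeffding_ineq_ge[OF \<epsilon>] n by simp_all
qed

lemma tendsto_exp_neg_linear:
  assumes "c > (0::real)"
  shows "(\<lambda>n. exp (- (c * real n))) \<longlonglongrightarrow> 0"
proof -
  have "(\<lambda>n. exp (- c) ^ n) \<longlonglongrightarrow> 0"
    using assms by (intro LIMSEQ_power_zero) simp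
  then show ?thesis by (simp add: exp_of_nat_mult[symmetric] mult.commute)
qed

section \<open>Consistency of sample quantiles in mean\<close>

definition abs_tail :: "nat \<Rightarrow> real \<Rightarrow> real" where
  "abs_tail N y = \<bar>y\<bar> * indicator {y. real N < \<bar>y\<bar>} y"

lemma abs_tail_nonneg: "abs_tail N y \<ge> 0"
  by (simp add: abs_tail_def)

lemma abs_le_abs_tail: "\<bar>y\<bar> \<le> real N + abs_tail N y"
  by (auto simp: abs_tail_def indicator_def)

lemma borel_measurable_abs_tail [measurable]: "abs_tail N \<in> borel_measurable borel"
  unfolding abs_tail_def by measurable

lemma integrable_abs_tail:
  assumes "integrable M abs" and "sets M = sets borel"
  shows "integrable M (abs_tail N)"
  by (intro Bochner_Integration.integrable_bound[OF assms(1)])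
     (auto simp: measurable_cong_sets[OF assms(2) refl] abs_tail_def indicator_def)

lemma tendsto_integral_abs_tail:
  assumes "integrable M abs" and "sets M = sets borel"
  shows "(\<lambda>N. \<integral>x. abs_tail N x \<partial>M) \<longlonglongrightarrow> 0"
proof -
  have "(\<lambda>N. \<integral>x. abs_tail N x \<partial>M) \<longlonglongrightarrow> (\<integral>x. 0 \<partial>M)"
  proof (rule integral_dominated_convergence[where w = abs])
    show "AE x in M. (\<lambda>N. abs_tail N x) \<longlonglongrightarrow> 0"
    proof (intro AE_I2 tendsto_eventually)
      fix x :: real
      obtain N0 :: nat where "\<bar>x\<bar> \<le> real N0" using real_arch_simple by blast
      then show "\<forall>\<^sub>F N in sequentially. abs_tail N x = 0"
        by (intro eventually_sequentiallyI[of N0]) (auto simp: abs_tail_def indicator_def)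
    qed
  qed (use assms in \<open>auto simp: measurable_cong_sets[OF assms(2) refl] abs_tail_def indicator_def\<close>)
  then show ?thesis by simp
qed

locale sample_quantile =
  fixes M :: "real measure" and t q :: real
  assumes prob: "prob_space M" and sets_M: "sets M = sets borel"
    and first_moment: "integrable M abs"
    and t_pos: "0 < t" and t_less_1: "t < 1"
    and cdf_left: "\<And>\<delta>. \<delta> > 0 \<Longrightarrow> measure M {..q - \<delta>} < t"
    and cdf_right: "\<And>\<delta>. \<delta> > 0 \<Longrightarrow> measure M {..q + \<delta>} > t"
begin

definition rank :: "nat \<Rightarrow> nat" where
  "rank n = nat \<lfloor>(real n - 1) * t\<rfloor>"

definition order_stat :: "nat \<Rightarrow> (nat \<Rightarrow> real) \<Rightarrow> real" where
  "order_stat n x = sort (map x [0..<n]) ! rank n"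

definition margin :: real where
  "margin = min (t / 2) (1 - t)"

definition far :: "real \<Rightarrow> nat \<Rightarrow> (nat \<Rightarrow> real) set" where
  "far \<delta> n = {x \<in> space (samples M n). \<delta> < \<bar>order_stat n x - q\<bar>}"

lemma PM_eq_order_stat: "v j = t \<Longrightarrow> PM n v x j = order_stat n x"
  by (simp add: PM_def order_stat_def rank_def)

lemma prob_space_samples: "prob_space (samples M n)"
  by (intro prob_space_PiM prob)

lemma margin_pos: "margin > 0"
  using t_pos t_less_1 by (simp add: margin_def)

lemma
  assumes "n > 0"
  shows rank_le: "real (rank n) \<le> (real n - 1) * t"
    and rank_gt: "(real n - 1) * t < real (rank n) + 1"
    and rank_less: "rank n < n"
proof -
  have "(real n - 1) * t \<ge> 0" using assms t_pos by simp
  then have rank: "real (rank n) = of_int \<lfloor>(real n - 1) * t\<rfloor>"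
    by (simp add: rank_def)
  show "real (rank n) \<le> (real n - 1) * t" "(real n - 1) * t < real (rank n) + 1"
    unfolding rank by linarith+
  moreover have "(real n - 1) * t < real n"
    using assms t_pos t_less_1 by (intro le_less_trans[OF mult_left_le]) auto
  ultimately show "rank n < n" by linarith
qed

lemma margin_mult_le:
  assumes n: "n > 0"
  shows "margin * real n \<le> real (min (rank n + 1) (n - rank n))"
proof -
  have "margin * real n \<le> real (rank n + 1)"
  proof (cases "n = 1")
    case False
    then have "t / 2 * real n \<le> (real n - 1) * t"
      using n t_pos by (simp add: field_simps)
    moreover have "margin * real n \<le> t / 2 * real n"
      by (intro mult_right_mono) (auto simp: margin_def min_def)
    ultimately show ?thesis using rank_gt[OF n] by simp
  qed (use t_less_1 in \<open>simp add: margin_def\<close>)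
  moreover have "margin * real n \<le> real (n - rank n)"
  proof -
    have "margin * real n \<le> (1 - t) * real n"
      by (intro mult_right_mono) (auto simp: margin_def)
    also have "\<dots> \<le> real n - real (rank n)"
      using rank_le[OF n] t_pos by (simp add: algebra_simps)
    finally show ?thesis using rank_less[OF n] by (simp add: of_nat_diff)
  qed
  ultimately show ?thesis by simp
qed

text \<open>This makes the order statistics uniformly integrable: the rank stays a fixed fraction
  away from both ends of the sample.\<close>
lemma abs_order_stat_le:
  assumes n: "n > 0"
  shows "\<bar>order_stat n x\<bar> * (margin * real n) \<le> (\<Sum>i<n. \<bar>x i\<bar>)"
proof -
  have "\<bar>order_stat n x\<bar> * (margin * real n)
      \<le> \<bar>order_stat n x\<bar> * real (min (rank n + 1) (n - rank n))"
    by (intro mult_left_mono margin_mult_le[OF n]) auto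
  also have "\<dots> \<le> (\<Sum>i<n. \<bar>x i\<bar>)"
    unfolding order_stat_def by (rule abs_sort_nth_mult_le_sum_abs[OF rank_less[OF n]])
  finally show ?thesis .
qed

lemma measurable_order_stat:
  "n > 0 \<Longrightarrow> order_stat n \<in> borel_measurable (samples M n)"
  unfolding order_stat_def[abs_def] by (rule measurable_sort_nth[OF sets_M rank_less])

lemma order_stat_le_iff:
  "n > 0 \<Longrightarrow> order_stat n x \<le> a \<longleftrightarrow> rank n < card {i. i < n \<and> x i \<le> a}"
  unfolding order_stat_def by (rule sort_nth_le_iff_card[OF rank_less])

lemma prob_order_stat_above_le:
  assumes n: "n > 0" and \<delta>: "\<delta> > 0"
  defines "d \<equiv> measure M {..q + \<delta>} - t"
  shows "measure (samples M n) {x \<in> space (samples M n). q + \<delta> < order_stat n x}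
    \<le> exp (- (2 * d\<^sup>2 * real n))"
proof -
  interpret P: prob_space "samples M n" by (rule prob_space_samples)
  have d: "d > 0" using cdf_right[OF \<delta>] by (simp add: d_def)
  have "{x \<in> space (samples M n). q + \<delta> < order_stat n x}
      \<subseteq> {x \<in> space (samples M n).
           (\<Sum>i<n. indicator {..q + \<delta>} (x i)) \<le> real n * measure M {..q + \<delta>} - real n * d}"
  proof safe
    fix x assume "q + \<delta> < order_stat n x"
    then have "real (card {i. i < n \<and> x i \<le> q + \<delta>}) \<le> real (rank n)"
      using order_stat_le_iff[OF n, of x "q + \<delta>"] by simp
    also have "\<dots> \<le> real n * measure M {..q + \<delta>} - real n * d"
      using rank_le[OF n] t_pos by (simp add: d_def algebra_simps)
    finally show "(\<Sum>i<n. indicator {..q + \<delta>} (x i)) \<le> real n * measure M {..q + \<delta>} - real n * d"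
      by (simp add: card_le_eq_sum_indicator)
  qed
  then have "measure (samples M n) {x \<in> space (samples M n). q + \<delta> < order_stat n x}
      \<le> exp (- 2 * (real n * d)\<^sup>2 / real n)"
    using sets_M n d
    by (intro order_trans[OF P.finite_measure_mono Hoeffding_sample_count_le[OF prob]]) auto
  also have "\<dots> = exp (- (2 * d\<^sup>2 * real n))"
    using n by (simp add: power2_eq_square)
  finally show ?thesis .
qed

lemma tendsto_prob_order_stat_above:
  assumes \<delta>: "\<delta> > 0"
  shows "(\<lambda>n. measure (samples M n) {x \<in> space (samples M n). q + \<delta> < order_stat n x}) \<longlonglongrightarrow> 0"
proof (rule tendsto_sandwich[OF _ _ tendsto_const tendsto_exp_neg_linear])
  show "\<forall>\<^sub>F n in sequentially. measure (samples M n) {x \<in> space (samples M n). q + \<delta> < order_stat n x}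
      \<le> exp (- (2 * (measure M {..q + \<delta>} - t)\<^sup>2 * real n))"
    using prob_order_stat_above_le[OF _ \<delta>] by (intro eventually_sequentiallyI[of 1]) simp
  show "0 < 2 * (measure M {..q + \<delta>} - t)\<^sup>2"
    using cdf_right[OF \<delta>] by simp
qed simp

lemma prob_order_stat_below_le:
  assumes n: "n > 0" and \<delta>: "\<delta> > 0"
  defines "d \<equiv> t - measure M {..q - \<delta>}"
  assumes large: "2 * t \<le> real n * d"
  shows "measure (samples M n) {x \<in> space (samples M n). order_stat n x \<le> q - \<delta>}
    \<le> exp (- (d\<^sup>2 / 2 * real n))"
proof -
  interpret P: prob_space "samples M n" by (rule prob_space_samples)
  have d: "d > 0" using cdf_left[OF \<delta>] by (simp add: d_def)
  have "{x \<in> space (samples M n). order_stat n x \<le> q - \<delta>}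
      \<subseteq> {x \<in> space (samples M n).
           (\<Sum>i<n. indicator {..q - \<delta>} (x i)) \<ge> real n * measure M {..q - \<delta>} + real n * d / 2}"
  proof safe
    fix x assume "order_stat n x \<le> q - \<delta>"
    then have "real (rank n) + 1 \<le> real (card {i. i < n \<and> x i \<le> q - \<delta>})"
      using order_stat_le_iff[OF n, of x "q - \<delta>"] by simp
    moreover have "real n * measure M {..q - \<delta>} + real n * d / 2 \<le> real (rank n) + 1"
    proof -
      have "real n * measure M {..q - \<delta>} = real n * t - real n * d"
        by (simp add: d_def algebra_simps)
      then show ?thesis using rank_gt[OF n] large by (simp add: algebra_simps)
    qed
    ultimately show "(\<Sum>i<n. indicator {..q - \<delta>} (x i)) \<ge> real n * measure M {..q - \<delta>} + real n * d / 2"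
      by (simp add: card_le_eq_sum_indicator)
  qed
  then have "measure (samples M n) {x \<in> space (samples M n). order_stat n x \<le> q - \<delta>}
      \<le> exp (- 2 * (real n * d / 2)\<^sup>2 / real n)"
    using sets_M n d
    by (intro order_trans[OF P.finite_measure_mono Hoeffding_sample_count_ge[OF prob]]) auto
  also have "\<dots> = exp (- (d\<^sup>2 / 2 * real n))"
    using n by (simp add: power2_eq_square)
  finally show ?thesis .
qed

lemma tendsto_prob_order_stat_below:
  assumes \<delta>: "\<delta> > 0"
  shows "(\<lambda>n. measure (samples M n) {x \<in> space (samples M n). order_stat n x \<le> q - \<delta>}) \<longlonglongrightarrow> 0"
proof -
  define d where "d = t - measure M {..q - \<delta>}"
  have d: "d > 0" using cdf_left[OF \<delta>] by (simp add: d_def)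
  obtain N :: nat where N: "2 * t / d \<le> real N" using real_arch_simple by blast
  show ?thesis
  proof (rule tendsto_sandwich[OF _ _ tendsto_const tendsto_exp_neg_linear])
    show "\<forall>\<^sub>F n in sequentially. measure (samples M n) {x \<in> space (samples M n). order_stat n x \<le> q - \<delta>}
        \<le> exp (- (d\<^sup>2 / 2 * real n))"
    proof (intro eventually_sequentiallyI[of "Suc N"])
      fix n assume n: "Suc N \<le> n"
      have "2 * t \<le> real N * d" using N d by (simp add: field_simps)
      also have "\<dots> \<le> real n * d" using n d by (intro mult_right_mono) auto
      finally show "measure (samples M n) {x \<in> space (samples M n). order_stat n x \<le> q - \<delta>}
          \<le> exp (- (d\<^sup>2 / 2 * real n))"
        using n \<delta> unfolding d_def by (intro prob_order_stat_below_le) auto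
    qed
  qed (use d in simp_all)
qed

lemma tendsto_prob_far:
  assumes "\<delta> > 0"
  shows "(\<lambda>n. measure (samples M n) (far \<delta> n)) \<longlonglongrightarrow> 0"
proof (rule tendsto_sandwich[OF _ _ tendsto_const
      tendsto_add_zero[OF tendsto_prob_order_stat_above[OF assms] tendsto_prob_order_stat_below[OF assms]]])
  show "\<forall>\<^sub>F n in sequentially. measure (samples M n) (far \<delta> n)
      \<le> measure (samples M n) {x \<in> space (samples M n). q + \<delta> < order_stat n x}
        + measure (samples M n) {x \<in> space (samples M n). order_stat n x \<le> q - \<delta>}"
  proof (intro eventually_sequentiallyI[of 1])
    fix n :: nat assume "1 \<le> n"
    then have [measurable]: "order_stat n \<in> borel_measurable (samples M n)"
      by (intro measurable_order_stat) simp
    interpret P: prob_space "samples M n" by (rule prob_space_samples)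
    have "far \<delta> n \<subseteq> {x \<in> space (samples M n). q + \<delta> < order_stat n x}
        \<union> {x \<in> space (samples M n). order_stat n x \<le> q - \<delta>}"
      by (auto simp: far_def)
    then show "measure (samples M n) (far \<delta> n)
        \<le> measure (samples M n) {x \<in> space (samples M n). q + \<delta> < order_stat n x}
          + measure (samples M n) {x \<in> space (samples M n). order_stat n x \<le> q - \<delta>}"
      by (intro order_trans[OF P.finite_measure_mono measure_Un_le]) auto
  qed
qed simp

definition majorant :: "real \<Rightarrow> nat \<Rightarrow> nat \<Rightarrow> (nat \<Rightarrow> real) \<Rightarrow> real" where
  "majorant \<delta> N n x = \<delta> + (\<bar>q\<bar> + real N / margin) * indicator (far \<delta> n) x
     + (\<Sum>i<n. abs_tail N (x i)) / (margin * real n)"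

lemma abs_order_stat_sub_le_majorant:
  assumes n: "n > 0" and x: "x \<in> space (samples M n)" and \<delta>: "\<delta> \<ge> 0"
  shows "\<bar>order_stat n x - q\<bar> \<le> majorant \<delta> N n x"
proof -
  have tail_nonneg: "(\<Sum>i<n. abs_tail N (x i)) / (margin * real n) \<ge> 0"
    using margin_pos by (simp add: abs_tail_nonneg sum_nonneg)
  show ?thesis
  proof (cases "x \<in> far \<delta> n")
    case False
    then show ?thesis
      using x tail_nonneg margin_pos by (simp add: majorant_def far_def)
  next
    case True
    have "\<bar>order_stat n x\<bar> * (margin * real n) \<le> (\<Sum>i<n. \<bar>x i\<bar>)"
      by (rule abs_order_stat_le[OF n])
    also have "\<dots> \<le> (\<Sum>i<n. real N + abs_tail N (x i))"
      by (intro sum_mono abs_le_abs_tail)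
    finally have "\<bar>order_stat n x\<bar> \<le> real N / margin + (\<Sum>i<n. abs_tail N (x i)) / (margin * real n)"
      using n margin_pos by (simp add: sum.distrib field_simps)
    then show ?thesis
      using True \<delta> by (simp add: majorant_def)
  qed
qed

lemma
  assumes n: "n > 0"
  shows integrable_majorant: "integrable (samples M n) (majorant \<delta> N n)"
    and integral_majorant: "(\<integral>x. majorant \<delta> N n x \<partial>samples M n)
      = \<delta> + (\<bar>q\<bar> + real N / margin) * measure (samples M n) (far \<delta> n)
        + (\<integral>y. abs_tail N y \<partial>M) / margin"
proof -
  interpret P: prob_space "samples M n" by (rule prob_space_samples)
  have [measurable]: "order_stat n \<in> borel_measurable (samples M n)"
    using n by (rule measurable_order_stat)
  have far_sets: "far \<delta> n \<in> sets (samples M n)"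
    unfolding far_def by measurable
  have tail_meas: "abs_tail N \<in> borel_measurable M"
    by (simp add: measurable_cong_sets[OF sets_M refl])
  have tail_int: "integrable (samples M n) (\<lambda>x. abs_tail N (x i))" if "i < n" for i
    using that integrable_abs_tail[OF first_moment sets_M]
    by (subst integrable_PiM_coordinate_iff[OF prob _ tail_meas]) auto
  have tail_integral: "(\<integral>x. abs_tail N (x i) \<partial>samples M n) = (\<integral>y. abs_tail N y \<partial>M)" if "i < n" for i
    using that by (intro integral_PiM_coordinate[OF prob _ tail_meas]) auto
  have ind_int: "integrable (samples M n) (indicator (far \<delta> n) :: _ \<Rightarrow> real)"
    using far_sets by (intro integrable_real_indicator) (simp_all add: P.emeasure_eq_measure)
  have sum_int: "integrable (samples M n) (\<lambda>x. \<Sum>i<n. abs_tail N (x i))"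
    using tail_int by (intro Bochner_Integration.integrable_sum) auto
  show "integrable (samples M n) (majorant \<delta> N n)"
    unfolding majorant_def using ind_int sum_int by simp
  have "(\<integral>x. majorant \<delta> N n x \<partial>samples M n)
      = \<delta> + (\<bar>q\<bar> + real N / margin) * measure (samples M n) (far \<delta> n)
        + (\<Sum>i<n. \<integral>x. abs_tail N (x i) \<partial>samples M n) / (margin * real n)"
    unfolding majorant_def using ind_int sum_int tail_int far_sets
    by (simp add: Bochner_Integration.integral_add Bochner_Integration.integral_sum P.prob_space)
  also have "\<dots> = \<delta> + (\<bar>q\<bar> + real N / margin) * measure (samples M n) (far \<delta> n)
      + (\<integral>y. abs_tail N y \<partial>M) / margin"
    using n by (simp add: tail_integral)
  finally show "(\<integral>x. majorant \<delta> N n x \<partial>samples M n)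
      = \<delta> + (\<bar>q\<bar> + real N / margin) * measure (samples M n) (far \<delta> n)
        + (\<integral>y. abs_tail N y \<partial>M) / margin" .
qed

lemma
  assumes n: "n > 0" and \<delta>: "\<delta> \<ge> 0"
  shows integrable_abs_order_stat_sub: "integrable (samples M n) (\<lambda>x. \<bar>order_stat n x - q\<bar>)"
    and integral_abs_order_stat_sub_le: "(\<integral>x. \<bar>order_stat n x - q\<bar> \<partial>samples M n)
      \<le> \<delta> + (\<bar>q\<bar> + real N / margin) * measure (samples M n) (far \<delta> n)
         + (\<integral>y. abs_tail N y \<partial>M) / margin"
proof -
  have bound: "AE x in samples M n. \<bar>order_stat n x - q\<bar> \<le> majorant \<delta> N n x"
    using n \<delta> by (intro AE_I2 abs_order_stat_sub_le_majorant)
  have "AE x in samples M n. norm \<bar>order_stat n x - q\<bar> \<le> norm (majorant \<delta> N n x)"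
    using bound by eventually_elim simp
  then show int: "integrable (samples M n) (\<lambda>x. \<bar>order_stat n x - q\<bar>)"
    using measurable_order_stat[OF n]
    by (intro Bochner_Integration.integrable_bound[OF integrable_majorant[OF n]]) auto
  show "(\<integral>x. \<bar>order_stat n x - q\<bar> \<partial>samples M n)
      \<le> \<delta> + (\<bar>q\<bar> + real N / margin) * measure (samples M n) (far \<delta> n)
         + (\<integral>y. abs_tail N y \<partial>M) / margin"
    unfolding integral_majorant[OF n, symmetric]
    using bound by (intro integral_mono_AE[OF int integrable_majorant[OF n]])
qed

theorem tendsto_integral_abs_order_stat:
  "(\<lambda>n. \<integral>x. \<bar>order_stat n x - q\<bar> \<partial>samples M n) \<longlonglongrightarrow> 0"
proof (rule order_tendstoI)
  fix e :: real assume "e < 0"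
  then show "\<forall>\<^sub>F n in sequentially. e < (\<integral>x. \<bar>order_stat n x - q\<bar> \<partial>samples M n)"
    by (intro always_eventually allI) (simp add: less_le_trans)
next
  fix e :: real assume e: "e > 0"
  have "\<forall>\<^sub>F N in sequentially. (\<integral>y. abs_tail N y \<partial>M) < margin * e / 3"
    using margin_pos e
    by (intro order_tendstoD(2)[OF tendsto_integral_abs_tail[OF first_moment sets_M]]) simp
  then obtain N where N: "(\<integral>y. abs_tail N y \<partial>M) / margin < e / 3"
    using margin_pos by (auto simp: eventually_sequentially field_simps)
  define K where "K = \<bar>q\<bar> + real N / margin"
  have "(\<lambda>n. K * measure (samples M n) (far (e / 3) n)) \<longlonglongrightarrow> 0"
    using e by (intro tendsto_mult_right_zero tendsto_prob_far) simp
  then have "\<forall>\<^sub>F n in sequentially. K * measure (samples M n) (far (e / 3) n) < e / 3"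
    using e by (intro order_tendstoD(2)) auto
  then show "\<forall>\<^sub>F n in sequentially. (\<integral>x. \<bar>order_stat n x - q\<bar> \<partial>samples M n) < e"
  proof (rule eventually_mono[OF eventually_conj[OF _ eventually_gt_at_top[of 0]]])
    fix n assume n: "K * measure (samples M n) (far (e / 3) n) < e / 3 \<and> 0 < n"
    then have "(\<integral>x. \<bar>order_stat n x - q\<bar> \<partial>samples M n)
        \<le> e / 3 + K * measure (samples M n) (far (e / 3) n) + (\<integral>y. abs_tail N y \<partial>M) / margin"
      using e unfolding K_def by (intro integral_abs_order_stat_sub_le) auto
    then show "(\<integral>x. \<bar>order_stat n x - q\<bar> \<partial>samples M n) < e"
      using n N by linarith
  qed
qed

end

section \<open>Quantiles of a distribution with positive density\<close>

context real_distribution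
begin

lemma Defs_cdf_eq: "Defs.cdf M = Distribution_Functions.cdf M"
  by (simp add: fun_eq_iff Defs.cdf_def cdf_def2)

lemma
  assumes "0 < t" and "t < 1"
  shows cdf_inv_set_nonempty: "{x. t \<le> Defs.cdf M x} \<noteq> {}"
    and cdf_inv_set_bdd_below: "bdd_below {x. t \<le> Defs.cdf M x}"
proof -
  have "\<forall>\<^sub>F x in at_top. t < Defs.cdf M x"
    using order_tendstoD(1)[OF cdf_lim_at_top_prob assms(2)] by (simp add: Defs_cdf_eq)
  then show "{x. t \<le> Defs.cdf M x} \<noteq> {}"
    by (auto simp: eventually_at_top_linorder dest: less_imp_le)
  have "\<forall>\<^sub>F x in at_bot. Defs.cdf M x < t"
    using order_tendstoD(2)[OF cdf_lim_at_bot assms(1)] by (simp add: Defs_cdf_eq)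
  then obtain b where below: "\<And>x. x \<le> b \<Longrightarrow> Defs.cdf M x < t"
    by (auto simp: eventually_at_bot_linorder)
  have "b \<le> x" if "t \<le> Defs.cdf M x" for x
    using below[of x] that by fastforce
  then show "bdd_below {x. t \<le> Defs.cdf M x}"
    unfolding bdd_below_def by blast
qed

lemma cdf_less_of_less_cdf_inv:
  assumes "0 < t" "t < 1" and "x < cdf_inv M t"
  shows "Defs.cdf M x < t"
proof (rule ccontr)
  assume "\<not> Defs.cdf M x < t"
  then have "cdf_inv M t \<le> x"
    unfolding cdf_inv_def using cdf_inv_set_bdd_below[OF assms(1,2)] by (intro cInf_lower) auto
  then show False using assms(3) by simp
qed

lemma cdf_cdf_inv_ge:
  assumes "0 < t" "t < 1"
  shows "t \<le> Defs.cdf M (cdf_inv M t)"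
proof (rule tendsto_lowerbound)
  show "(Defs.cdf M \<longlongrightarrow> Defs.cdf M (cdf_inv M t)) (at_right (cdf_inv M t))"
    using cdf_is_right_cont by (simp add: Defs_cdf_eq continuous_within)
  show "\<forall>\<^sub>F x in at_right (cdf_inv M t). t \<le> Defs.cdf M x"
  proof (rule eventually_at_rightI[of "cdf_inv M t" "cdf_inv M t + 1"])
    fix x assume "x \<in> {cdf_inv M t<..<cdf_inv M t + 1}"
    then obtain s where "t \<le> Defs.cdf M s" "s < x"
      using cInf_less_iff[OF cdf_inv_set_nonempty[OF assms] cdf_inv_set_bdd_below[OF assms]]
      by (auto simp: cdf_inv_def)
    then show "t \<le> Defs.cdf M x"
      using cdf_nondecreasing[of s x] by (simp add: Defs_cdf_eq)
  qed simp
qed simp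

lemma cdf_inv_mono:
  assumes "0 < t" "t \<le> t'" "t' < 1"
  shows "cdf_inv M t \<le> cdf_inv M t'"
proof -
  have "t \<le> Defs.cdf M (cdf_inv M t')"
    using cdf_cdf_inv_ge[of t'] assms by simp
  then show ?thesis
    unfolding cdf_inv_def[of M t]
    using assms cdf_inv_set_bdd_below[of t] by (intro cInf_lower) auto
qed

end

locale density_on_interval =
  fixes \<mu> :: "real measure" and \<rho> :: "real \<Rightarrow> real" and I :: "real set"
  assumes prob: "prob_space \<mu>"
    and dens_meas: "\<rho> \<in> borel_measurable borel"
    and dens: "\<mu> = density lborel (\<lambda>x. ennreal (\<rho> x))"
    and I_interval: "is_interval I"
    and dens_pos: "\<And>x. x \<in> interior I \<Longrightarrow> \<rho> x > 0"
    and dens_zero: "\<And>x. x \<notin> I \<Longrightarrow> \<rho> x = 0"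
begin

lemma sets_\<mu>: "sets \<mu> = sets borel"
  by (simp add: dens)

sublocale real_distribution \<mu>
  using prob sets_\<mu> by (intro real_distribution.intro real_distribution_axioms.intro)

lemma emeasure_\<mu>: "A \<in> sets borel \<Longrightarrow> emeasure \<mu> A = (\<integral>\<^sup>+ x. ennreal (\<rho> x) * indicator A x \<partial>lborel)"
  unfolding dens using dens_meas by (subst emeasure_density) auto

lemma measure_pos_imp_meets_support:
  assumes "A \<in> sets borel" and "measure \<mu> A > 0"
  shows "A \<inter> I \<noteq> {}"
proof
  assume "A \<inter> I = {}"
  then have "\<rho> x = 0" if "x \<in> A" for x
    using that dens_zero by blast
  then have "(\<lambda>x. ennreal (\<rho> x) * indicator A x) = (\<lambda>x. 0)"
    by (auto simp: fun_eq_iff split: split_indicator)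
  then have "emeasure \<mu> A = 0"
    using emeasure_\<mu>[OF assms(1)] by simp
  then show False
    using assms(2) by (simp add: emeasure_eq_measure)
qed

lemma measure_Ioo_pos:
  assumes "a < b" and "{a<..<b} \<subseteq> I"
  shows "measure \<mu> {a<..<b} > 0"
proof (rule ccontr)
  assume "\<not> measure \<mu> {a<..<b} > 0"
  then have "measure \<mu> {a<..<b} = 0"
    using measure_nonneg[of \<mu> "{a<..<b}"] by linarith
  then have "(\<integral>\<^sup>+ x. ennreal (\<rho> x) * indicator {a<..<b} x \<partial>lborel) = 0"
    using emeasure_\<mu>[of "{a<..<b}"] by (simp add: emeasure_eq_measure)
  then have ae: "AE x in lborel. ennreal (\<rho> x) * indicator {a<..<b} x = 0"
    using dens_meas by (subst (asm) nn_integral_0_iff_AE) auto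
  have nonzero: "ennreal (\<rho> x) * indicator {a<..<b} x \<noteq> 0" if "x \<in> {a<..<b}" for x
    using that interior_maximal[OF assms(2)] dens_pos[of x] by auto
  have "AE x in lborel. x \<notin> {a<..<b}"
    using ae by eventually_elim (use nonzero in blast)
  then have "emeasure lborel {a<..<b} = 0"
    by (subst (asm) AE_iff_measurable[of "{a<..<b}"]) auto
  then show False
    using assms(1) by simp
qed

text \<open>There is mass at or below the quantile and mass beyond \<open>q + \<delta>\<close>; the support is an
  interval with positive density inside, so the gap \<open>(q, q + \<delta>)\<close> carries mass as well.\<close>
lemma cdf_cdf_inv_add_gt:
  assumes t: "0 < t" "t < 1" and \<delta>: "\<delta> > 0"
  shows "t < Defs.cdf \<mu> (cdf_inv \<mu> t + \<delta>)"
proof (rule ccontr)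
  define q where "q = cdf_inv \<mu> t"
  assume "\<not> t < Defs.cdf \<mu> (cdf_inv \<mu> t + \<delta>)"
  then have le: "Defs.cdf \<mu> (q + \<delta>) \<le> t" by (simp add: q_def)
  have q: "t \<le> Defs.cdf \<mu> q"
    using cdf_cdf_inv_ge[OF t] by (simp add: q_def)
  have "measure \<mu> {..q} > 0"
    using q t by (simp add: Defs.cdf_def)
  then obtain a where a: "a \<le> q" "a \<in> I"
    using measure_pos_imp_meets_support[of "{..q}"] by auto
  have "measure \<mu> {q + \<delta><..} = 1 - Defs.cdf \<mu> (q + \<delta>)"
    using prob_compl[of "{..q + \<delta>}"] by (simp add: Defs.cdf_def Compl_eq_Diff_UNIV[symmetric])
  then have "measure \<mu> {q + \<delta><..} > 0"
    using le t by simp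
  then obtain b where b: "q + \<delta> < b" "b \<in> I"
    using measure_pos_imp_meets_support[of "{q + \<delta><..}"] by auto
  have "{q<..<q + \<delta>} \<subseteq> I"
  proof
    fix x assume "x \<in> {q<..<q + \<delta>}"
    then show "x \<in> I"
      using a b by (intro mem_is_interval_1_I[OF I_interval a(2) b(2)]) auto
  qed
  then have "0 < measure \<mu> {q<..<q + \<delta>}"
    using \<delta> by (intro measure_Ioo_pos) auto
  also have "\<dots> \<le> measure \<mu> {q<..q + \<delta>}"
    by (intro finite_measure_mono) auto
  also have "\<dots> = Defs.cdf \<mu> (q + \<delta>) - Defs.cdf \<mu> q"
    using cdf_diff_eq[of q "q + \<delta>"] \<delta> by (simp add: Defs_cdf_eq)
  finally show False
    using le q by simp
qed

lemma sample_quantile_cdf_inv: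
  assumes "integrable \<mu> abs" and "0 < t" "t < 1"
  shows "sample_quantile \<mu> t (cdf_inv \<mu> t)"
proof
  show "measure \<mu> {..cdf_inv \<mu> t - \<delta>} < t" if "\<delta> > 0" for \<delta>
    using cdf_less_of_less_cdf_inv[of t "cdf_inv \<mu> t - \<delta>"] that assms by (simp add: Defs.cdf_def)
  show "measure \<mu> {..cdf_inv \<mu> t + \<delta>} > t" if "\<delta> > 0" for \<delta>
    using cdf_cdf_inv_add_gt[of t \<delta>] that assms by (simp add: Defs.cdf_def)
qed (use assms prob sets_\<mu> in simp_all)

end

section \<open>Transport to the nearest atom\<close>

lemma W1_distr_le:
  fixes M :: "real measure" and T :: "real \<Rightarrow> real"
  assumes sets_M: "sets M = sets borel" and T_meas: "T \<in> borel_measurable borel"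
  shows "W1 M (distr M borel T) \<le> (\<integral>\<^sup>+ x. ennreal \<bar>x - T x\<bar> \<partial>M)"
proof -
  have graph: "(\<lambda>x. (x, T x)) \<in> measurable M (borel \<Otimes>\<^sub>M borel)"
    using T_meas by (intro measurable_Pair) (simp_all add: measurable_cong_sets[OF sets_M refl])
  have "distr (distr M (borel \<Otimes>\<^sub>M borel) (\<lambda>x. (x, T x))) borel fst = distr M borel (\<lambda>x. x)"
    using distr_distr[OF measurable_fst graph] by (simp add: comp_def)
  moreover have "distr (distr M (borel \<Otimes>\<^sub>M borel) (\<lambda>x. (x, T x))) borel snd = distr M borel T"
    using distr_distr[OF measurable_snd graph] by (simp add: comp_def)
  moreover have "distr M borel (\<lambda>x. x) = M"
    using sets_M by (intro distr_id2) simp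
  ultimately have "distr M (borel \<Otimes>\<^sub>M borel) (\<lambda>x. (x, T x)) \<in> couplings M (distr M borel T)"
    unfolding couplings_def by simp
  then have "W1 M (distr M borel T)
      \<le> (\<integral>\<^sup>+ p. ennreal \<bar>fst p - snd p\<bar> \<partial>distr M (borel \<Otimes>\<^sub>M borel) (\<lambda>x. (x, T x)))"
    unfolding W1_def by (rule INF_lower)
  also have "\<dots> = (\<integral>\<^sup>+ x. ennreal \<bar>x - T x\<bar> \<partial>M)"
    by (subst nn_integral_distr[OF graph]) simp_all
  finally show ?thesis .
qed

lemma nn_integral_le_W1_distr_nearest:
  fixes M :: "real measure" and T :: "real \<Rightarrow> real" and A :: "real set"
  assumes sets_M: "sets M = sets borel" and A: "finite A"
    and T_meas: "T \<in> borel_measurable borel"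
    and T_atom: "\<And>x. T x \<in> A"
    and T_nearest: "\<And>x a. a \<in> A \<Longrightarrow> \<bar>x - T x\<bar> \<le> \<bar>x - a\<bar>"
  shows "(\<integral>\<^sup>+ x. ennreal \<bar>x - T x\<bar> \<partial>M) \<le> W1 M (distr M borel T)"
  unfolding W1_def
proof (rule INF_greatest)
  fix \<pi> assume "\<pi> \<in> couplings M (distr M borel T)"
  then have sets_\<pi>: "sets \<pi> = sets (borel \<Otimes>\<^sub>M borel)" and fst_\<pi>: "distr \<pi> borel fst = M"
    and snd_\<pi>: "distr \<pi> borel snd = distr M borel T"
    by (auto simp: couplings_def)
  have fst_meas: "fst \<in> borel_measurable \<pi>" and snd_meas: "snd \<in> borel_measurable \<pi>"
    by (simp_all add: measurable_cong_sets[OF sets_\<pi> refl])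
  have A_sets: "A \<in> sets borel"
    using A by (simp add: finite_imp_closed)
  have "AE y in distr M borel T. y \<in> A"
    using T_meas A_sets T_atom
    by (subst AE_distr_iff) (simp_all add: measurable_cong_sets[OF sets_M refl])
  then have "AE y in distr \<pi> borel snd. y \<in> A"
    unfolding snd_\<pi> .
  then have "AE p in \<pi>. snd p \<in> A"
    using A_sets by (subst (asm) AE_distr_iff[OF snd_meas]) auto
  then have "AE p in \<pi>. ennreal \<bar>fst p - T (fst p)\<bar> \<le> ennreal \<bar>fst p - snd p\<bar>"
    by eventually_elim (simp add: ennreal_leI T_nearest)
  then have "(\<integral>\<^sup>+ p. ennreal \<bar>fst p - T (fst p)\<bar> \<partial>\<pi>) \<le> (\<integral>\<^sup>+ p. ennreal \<bar>fst p - snd p\<bar> \<partial>\<pi>)"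
    by (rule nn_integral_mono_AE)
  moreover have "(\<integral>\<^sup>+ p. ennreal \<bar>fst p - T (fst p)\<bar> \<partial>\<pi>) = (\<integral>\<^sup>+ x. ennreal \<bar>x - T x\<bar> \<partial>M)"
    using T_meas by (simp add: fst_\<pi>[symmetric] nn_integral_distr[OF fst_meas])
  ultimately show "(\<integral>\<^sup>+ x. ennreal \<bar>x - T x\<bar> \<partial>M) \<le> (\<integral>\<^sup>+ p. ennreal \<bar>fst p - snd p\<bar> \<partial>\<pi>)"
    by simp
qed

lemma W1_distr_nearest:
  fixes M :: "real measure" and T :: "real \<Rightarrow> real" and A :: "real set"
  assumes "sets M = sets borel" and "finite A"
    and "T \<in> borel_measurable borel"
    and "\<And>x. T x \<in> A"
    and "\<And>x a. a \<in> A \<Longrightarrow> \<bar>x - T x\<bar> \<le> \<bar>x - a\<bar>"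
  shows "W1 M (distr M borel T) = (\<integral>\<^sup>+ x. ennreal \<bar>x - T x\<bar> \<partial>M)"
  by (intro antisym W1_distr_le[OF assms(1,3)] nn_integral_le_W1_distr_nearest[OF assms])

locale sorted_atoms =
  fixes k :: nat and q :: "nat \<Rightarrow> real"
  assumes k_pos: "k > 0"
    and q_mono: "\<And>i j. i \<le> j \<Longrightarrow> j < k \<Longrightarrow> q i \<le> q j"
begin

definition midpoint :: "nat \<Rightarrow> real" where
  "midpoint i = (q (i - 1) + q i) / 2"

definition cell :: "nat \<Rightarrow> real set" where
  "cell i = {x. (i = 0 \<or> midpoint i < x) \<and> (k \<le> Suc i \<or> x \<le> midpoint (Suc i))}"

definition nearest :: "real \<Rightarrow> real" where
  "nearest x = (\<Sum>i<k. q i * indicator (cell i) x)"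

lemma midpoint_mono:
  assumes "1 \<le> i" "i \<le> j" "j < k"
  shows "midpoint i \<le> midpoint j"
proof -
  have "q (i - 1) \<le> q (j - 1)" and "q i \<le> q j"
    using assms by (auto intro: q_mono)
  then show ?thesis by (simp add: midpoint_def)
qed

lemma cell_sets [measurable]: "cell i \<in> sets borel"
  unfolding cell_def by measurable

lemma ex_cell: "\<exists>i<k. x \<in> cell i"
proof -
  define C where "C = {i. i < k \<and> (i = 0 \<or> midpoint i < x)}"
  have "Max C \<in> C"
    unfolding C_def using k_pos by (intro Max_in) auto
  moreover have "k \<le> Suc (Max C) \<or> x \<le> midpoint (Suc (Max C))"
  proof (rule ccontr)
    assume "\<not> (k \<le> Suc (Max C) \<or> x \<le> midpoint (Suc (Max C)))"
    then have "Suc (Max C) \<in> C" by (auto simp: C_def)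
    then have "Suc (Max C) \<le> Max C" by (intro Max_ge) (auto simp: C_def)
    then show False by simp
  qed
  ultimately show ?thesis
    by (auto simp: C_def cell_def)
qed

lemma cell_disjoint:
  assumes "i < j" "j < k"
  shows "cell i \<inter> cell j = {}"
  using midpoint_mono[of "Suc i" j] assms by (auto simp: cell_def)

lemma cell_unique: "i < k \<Longrightarrow> j < k \<Longrightarrow> x \<in> cell i \<Longrightarrow> x \<in> cell j \<Longrightarrow> i = j"
  using cell_disjoint[of i j] cell_disjoint[of j i] by (cases i j rule: linorder_cases) auto

lemma cell_nearest:
  assumes i: "i < k" and x: "x \<in> cell i" and j: "j < k"
  shows "\<bar>x - q i\<bar> \<le> \<bar>x - q j\<bar>"
proof (cases i j rule: linorder_cases)
  case less
  then have "x \<le> midpoint (Suc i)" "q i \<le> q (Suc i)" "q (Suc i) \<le> q j"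
    using x j by (auto simp: cell_def intro: q_mono)
  then show ?thesis by (simp add: midpoint_def)
next
  case greater
  then have "midpoint i < x" "q j \<le> q (i - 1)" "q (i - 1) \<le> q i"
    using x i by (auto simp: cell_def intro: q_mono)
  then show ?thesis by (simp add: midpoint_def)
qed simp

lemma nearest_eq: "i < k \<Longrightarrow> x \<in> cell i \<Longrightarrow> nearest x = q i"
  unfolding nearest_def
  by (subst sum.mono_neutral_right[of "{..<k}" "{i}"]) (auto simp: indicator_def dest: cell_unique)

lemma borel_measurable_nearest [measurable]: "nearest \<in> borel_measurable borel"
  unfolding nearest_def by measurable

lemma nearest_in_atoms: "nearest x \<in> q ` {..<k}"
  using ex_cell[of x] nearest_eq by auto

lemma abs_sub_nearest_le: "a \<in> q ` {..<k} \<Longrightarrow> \<bar>x - nearest x\<bar> \<le> \<bar>x - a\<bar>"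
  using ex_cell[of x] nearest_eq cell_nearest by auto

lemma abs_sub_nearest_eq_Min: "\<bar>x - nearest x\<bar> = Min ((\<lambda>j. \<bar>x - q j\<bar>) ` {..<k})"
  using nearest_in_atoms[of x] abs_sub_nearest_le[of _ x] k_pos
  by (intro antisym Min.boundedI Min_le) auto

lemma distr_nearest:
  assumes sets_M: "sets M = sets borel"
  shows "distr M borel nearest = distr (point_measure {..<k} (\<lambda>i. emeasure M (cell i))) borel q"
proof (rule measure_eqI)
  fix A :: "real set" assume "A \<in> sets (distr M borel nearest)"
  then have A: "A \<in> sets borel" by simp
  define J where "J = {i. i < k \<and> q i \<in> A}"
  have "nearest -` A \<inter> space M = (\<Union>i\<in>J. cell i)"
  proof (intro equalityI subsetI)
    fix x assume x: "x \<in> nearest -` A \<inter> space M"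
    obtain i where "i < k" "x \<in> cell i" using ex_cell by blast
    then show "x \<in> (\<Union>i\<in>J. cell i)" using x nearest_eq by (auto simp: J_def)
  next
    fix x assume "x \<in> (\<Union>i\<in>J. cell i)"
    then show "x \<in> nearest -` A \<inter> space M"
      using nearest_eq sets_eq_imp_space_eq[OF sets_M] by (auto simp: J_def)
  qed
  then have "emeasure (distr M borel nearest) A = emeasure M (\<Union>i\<in>J. cell i)"
    using A by (simp add: emeasure_distr measurable_cong_sets[OF sets_M refl])
  also have "\<dots> = (\<Sum>i\<in>J. emeasure M (cell i))"
    using sets_M cell_unique
    by (intro sum_emeasure[symmetric]) (auto simp: J_def disjoint_family_on_def)
  also have "\<dots> = emeasure (point_measure {..<k} (\<lambda>i. emeasure M (cell i))) (q -` A \<inter> {..<k})"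
    by (subst emeasure_point_measure_finite) (auto simp: J_def intro: sum.cong)
  also have "\<dots> = emeasure (distr (point_measure {..<k} (\<lambda>i. emeasure M (cell i))) borel q) A"
    using A by (simp add: emeasure_distr space_point_measure)
  finally show "emeasure (distr M borel nearest) A
      = emeasure (distr (point_measure {..<k} (\<lambda>i. emeasure M (cell i))) borel q) A" .
qed simp

end

section \<open>Expected social cost\<close>

definition min_dist :: "nat \<Rightarrow> (nat \<Rightarrow> real) \<Rightarrow> real \<Rightarrow> real" where
  "min_dist k y a = Min ((\<lambda>j. \<bar>a - y j\<bar>) ` {..<k})"

lemma SC_eq_mean_min_dist: "SC n x k y = (\<Sum>i<n. min_dist k y (x i)) / real n"
  by (simp add: SC_def min_dist_def)

lemma min_dist_nonneg: "k > 0 \<Longrightarrow> min_dist k y a \<ge> 0"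
  unfolding min_dist_def by (intro Min.boundedI) auto

lemma min_dist_le: "j < k \<Longrightarrow> min_dist k y a \<le> \<bar>a - y j\<bar>"
  unfolding min_dist_def by (intro Min_le) auto

lemma borel_measurable_min_dist [measurable]: "min_dist k y \<in> borel_measurable borel"
  unfolding min_dist_def by measurable

lemma Min_image_le_add_sum:
  fixes f g :: "'a \<Rightarrow> real"
  assumes "finite J" "J \<noteq> {}"
  shows "Min (f ` J) \<le> Min (g ` J) + (\<Sum>j\<in>J. \<bar>f j - g j\<bar>)"
proof -
  have "Min (g ` J) \<in> g ` J"
    using assms by (intro Min_in) auto
  then obtain j where j: "j \<in> J" "g j = Min (g ` J)"
    by (metis imageE)
  have "Min (f ` J) \<le> f j"
    using assms j by (intro Min_le) auto
  also have "\<dots> \<le> g j + \<bar>f j - g j\<bar>" by simp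
  also have "\<bar>f j - g j\<bar> \<le> (\<Sum>j\<in>J. \<bar>f j - g j\<bar>)"
    using assms j by (intro member_le_sum) auto
  finally show ?thesis using j by simp
qed

lemma abs_min_dist_diff_le:
  assumes "k > 0"
  shows "\<bar>min_dist k y a - min_dist k q a\<bar> \<le> (\<Sum>j<k. \<bar>y j - q j\<bar>)"
proof -
  let ?S = "\<Sum>j<k. \<bar>y j - q j\<bar>"
  have "(\<Sum>j<k. \<bar>\<bar>a - y j\<bar> - \<bar>a - q j\<bar>\<bar>) \<le> ?S"
    by (intro sum_mono) linarith
  moreover have "(\<Sum>j<k. \<bar>\<bar>a - q j\<bar> - \<bar>a - y j\<bar>\<bar>) = (\<Sum>j<k. \<bar>\<bar>a - y j\<bar> - \<bar>a - q j\<bar>\<bar>)"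
    by (simp add: abs_minus_commute)
  moreover have "min_dist k y a \<le> min_dist k q a + (\<Sum>j<k. \<bar>\<bar>a - y j\<bar> - \<bar>a - q j\<bar>\<bar>)"
    and "min_dist k q a \<le> min_dist k y a + (\<Sum>j<k. \<bar>\<bar>a - q j\<bar> - \<bar>a - y j\<bar>\<bar>)"
    unfolding min_dist_def using assms by (auto intro: Min_image_le_add_sum)
  ultimately show ?thesis
    by (simp add: abs_le_iff)
qed

lemma integrable_min_dist:
  assumes "finite_measure M" and sets_M: "sets M = sets borel"
    and "integrable M abs" and "k > 0"
  shows "integrable M (min_dist k q)"
proof (rule Bochner_Integration.integrable_bound)
  show "integrable M (\<lambda>a. \<bar>a\<bar> + \<bar>q 0\<bar>)"
    using assms(1,3) by (intro Bochner_Integration.integrable_add finite_measure.integrable_const)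
  show "min_dist k q \<in> borel_measurable M"
    by (simp add: measurable_cong_sets[OF sets_M refl])
  show "AE a in M. norm (min_dist k q a) \<le> norm (\<bar>a\<bar> + \<bar>q 0\<bar>)"
    using min_dist_le[of 0 k q] min_dist_nonneg[of k q] assms(4)
    by (intro AE_I2) (simp add: order_trans[OF _ abs_triangle_ineq4])
qed

context
  fixes M :: "real measure" and k :: nat and q :: "nat \<Rightarrow> real"
    and y :: "nat \<Rightarrow> (nat \<Rightarrow> real) \<Rightarrow> nat \<Rightarrow> real"
  assumes prob: "prob_space M" and sets_M: "sets M = sets borel" and k_pos: "k > 0"
    and min_dist_int: "integrable M (min_dist k q)"
    and y_meas: "\<And>n j. n > 0 \<Longrightarrow> j < k \<Longrightarrow> (\<lambda>x. y n x j) \<in> borel_measurable (samples M n)"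
    and y_int: "\<And>n j. n > 0 \<Longrightarrow> j < k \<Longrightarrow> integrable (samples M n) (\<lambda>x. \<bar>y n x j - q j\<bar>)"
    and y_lim: "\<And>j. j < k \<Longrightarrow> (\<lambda>n. \<integral>x. \<bar>y n x j - q j\<bar> \<partial>samples M n) \<longlonglongrightarrow> 0"
begin

private definition mean_dist :: "nat \<Rightarrow> (nat \<Rightarrow> real) \<Rightarrow> real" where
  "mean_dist n x = (\<Sum>i<n. min_dist k q (x i)) / real n"

private definition err :: "nat \<Rightarrow> (nat \<Rightarrow> real) \<Rightarrow> real" where
  "err n x = (\<Sum>j<k. \<bar>y n x j - q j\<bar>)"

private lemma abs_SC_sub_mean_dist_le:
  assumes "n > 0"
  shows "\<bar>SC n x k (y n x) - mean_dist n x\<bar> \<le> err n x"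
proof -
  have "SC n x k (y n x) - mean_dist n x
      = (\<Sum>i<n. min_dist k (y n x) (x i) - min_dist k q (x i)) / real n"
    by (simp add: SC_eq_mean_min_dist mean_dist_def sum_subtractf diff_divide_distrib)
  then have "\<bar>SC n x k (y n x) - mean_dist n x\<bar>
      = \<bar>\<Sum>i<n. min_dist k (y n x) (x i) - min_dist k q (x i)\<bar> / real n"
    by simp
  also have "\<dots> \<le> (\<Sum>i<n. err n x) / real n"
    unfolding err_def using k_pos
    by (intro divide_right_mono order_trans[OF sum_abs sum_mono] abs_min_dist_diff_le) auto
  also have "\<dots> = err n x"
    using assms by simp
  finally show ?thesis .
qed

private lemma
  assumes "i < n"
  shows min_dist_coord_integral: "(\<integral>x. min_dist k q (x i) \<partial>samples M n) = (\<integral>a. min_dist k q a \<partial>M)"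
    and min_dist_coord_int: "integrable (samples M n) (\<lambda>x. min_dist k q (x i))"
proof -
  have meas: "min_dist k q \<in> borel_measurable M"
    by (simp add: measurable_cong_sets[OF sets_M refl])
  show "(\<integral>x. min_dist k q (x i) \<partial>samples M n) = (\<integral>a. min_dist k q a \<partial>M)"
    using assms by (intro integral_PiM_coordinate[OF prob _ meas]) simp
  show "integrable (samples M n) (\<lambda>x. min_dist k q (x i))"
    using assms min_dist_int by (subst integrable_PiM_coordinate_iff[OF prob _ meas]) simp_all
qed

private lemma integrable_mean_dist: "integrable (samples M n) (mean_dist n)"
  unfolding mean_dist_def using min_dist_coord_int
  by (intro integrable_divide_zero Bochner_Integration.integrable_sum) auto

private lemma integral_mean_dist:
  assumes "n > 0"
  shows "integral\<^sup>L (samples M n) (mean_dist n) = (\<integral>a. min_dist k q a \<partial>M)"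
proof -
  have "(\<integral>x. (\<Sum>i<n. min_dist k q (x i)) \<partial>samples M n)
      = (\<Sum>i<n. \<integral>x. min_dist k q (x i) \<partial>samples M n)"
    using min_dist_coord_int by (intro Bochner_Integration.integral_sum) simp
  then show ?thesis
    unfolding mean_dist_def using assms by (simp add: min_dist_coord_integral)
qed

private lemma integrable_err: "n > 0 \<Longrightarrow> integrable (samples M n) (err n)"
  unfolding err_def using y_int by auto

private lemma tendsto_integral_err: "(\<lambda>n. integral\<^sup>L (samples M n) (err n)) \<longlonglongrightarrow> 0"
proof (rule Lim_transform_eventually)
  show "(\<lambda>n. \<Sum>j<k. \<integral>x. \<bar>y n x j - q j\<bar> \<partial>samples M n) \<longlonglongrightarrow> 0"
    using y_lim by (intro tendsto_null_sum) auto
  show "\<forall>\<^sub>F n in sequentially. (\<Sum>j<k. \<integral>x. \<bar>y n x j - q j\<bar> \<partial>samples M n) = integral\<^sup>L (samples M n) (err n)"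
    unfolding err_def using y_int
    by (intro eventually_sequentiallyI[of 1]) (simp add: Bochner_Integration.integral_sum)
qed

private lemma integrable_SC: "n > 0 \<Longrightarrow> integrable (samples M n) (\<lambda>x. SC n x k (y n x))"
proof -
  assume n: "n > 0"
  have coord: "(\<lambda>x. x i) \<in> borel_measurable (samples M n)" if "i \<in> {..<n}" for i
    using measurable_component_singleton[OF that, of "\<lambda>_. M"]
    by (simp add: measurable_cong_sets[OF refl sets_M])
  have "(\<lambda>x. min_dist k (y n x) (x i)) \<in> borel_measurable (samples M n)" if "i < n" for i
    unfolding min_dist_def using that coord y_meas[OF n]
    by (intro borel_measurable_Min borel_measurable_abs borel_measurable_diff) auto
  then have meas: "(\<lambda>x. SC n x k (y n x)) \<in> borel_measurable (samples M n)"
    unfolding SC_eq_mean_min_dist by (intro borel_measurable_divide borel_measurable_sum) auto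
  have bound: "\<bar>SC n x k (y n x)\<bar> \<le> mean_dist n x + err n x" for x
  proof -
    have "SC n x k (y n x) \<ge> 0" and "mean_dist n x \<ge> 0"
      using k_pos by (simp_all add: SC_eq_mean_min_dist mean_dist_def min_dist_nonneg sum_nonneg)
    then show ?thesis
      using abs_SC_sub_mean_dist_le[OF n, of x] by simp
  qed
  show ?thesis
  proof (rule Bochner_Integration.integrable_bound[OF _ meas])
    show "integrable (samples M n) (\<lambda>x. mean_dist n x + err n x)"
      using integrable_mean_dist integrable_err[OF n] by (rule Bochner_Integration.integrable_add)
    show "AE x in samples M n. norm (SC n x k (y n x)) \<le> norm (mean_dist n x + err n x)"
      using bound by (intro AE_I2) (simp add: order_trans[OF _ abs_ge_self])
  qed
qed

lemma tendsto_integral_SC: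
  "(\<lambda>n. \<integral>x. SC n x k (y n x) \<partial>samples M n) \<longlonglongrightarrow> (\<integral>a. min_dist k q a \<partial>M)"
proof (rule Lim_null_comparison[OF _ tendsto_integral_err, THEN LIM_zero_cancel])
  show "\<forall>\<^sub>F n in sequentially.
      norm ((\<integral>x. SC n x k (y n x) \<partial>samples M n) - (\<integral>a. min_dist k q a \<partial>M)) \<le> integral\<^sup>L (samples M n) (err n)"
  proof (rule eventually_sequentiallyI[of 1])
    fix n :: nat assume "1 \<le> n"
    then have n: "n > 0" by simp
    have "norm ((\<integral>x. SC n x k (y n x) \<partial>samples M n) - (\<integral>a. min_dist k q a \<partial>M))
        = norm (\<integral>x. SC n x k (y n x) - mean_dist n x \<partial>samples M n)"
      using integral_mean_dist[OF n] integrable_SC[OF n] integrable_mean_dist by simp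
    also have "\<dots> \<le> (\<integral>x. \<bar>SC n x k (y n x) - mean_dist n x\<bar> \<partial>samples M n)"
      using integral_norm_bound by simp
    also have "\<dots> \<le> integral\<^sup>L (samples M n) (err n)"
      using abs_SC_sub_mean_dist_le[OF n] integrable_SC[OF n] integrable_mean_dist integrable_err[OF n]
      by (intro integral_mono) auto
    finally show "norm ((\<integral>x. SC n x k (y n x) \<partial>samples M n) - (\<integral>a. min_dist k q a \<partial>M))
        \<le> integral\<^sup>L (samples M n) (err n)" .
  qed
qed

lemma tendsto_nn_integral_SC:
  "(\<lambda>n. \<integral>\<^sup>+ x. ennreal (SC n x k (y n x)) \<partial>samples M n) \<longlonglongrightarrow> ennreal (\<integral>a. min_dist k q a \<partial>M)"
proof (rule Lim_transform_eventually[OF tendsto_ennrealI[OF tendsto_integral_SC]])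
  show "\<forall>\<^sub>F n in sequentially.
      ennreal (\<integral>x. SC n x k (y n x) \<partial>samples M n) = (\<integral>\<^sup>+ x. ennreal (SC n x k (y n x)) \<partial>samples M n)"
    using integrable_SC k_pos
    by (intro eventually_sequentiallyI[of 1] nn_integral_eq_integral[symmetric])
       (auto simp: SC_eq_mean_min_dist min_dist_nonneg sum_nonneg)
qed

end

section \<open>The percentile mechanism\<close>

lemma (in real_distribution) nuQ_eq_distr_nearest:
  assumes "sorted_atoms k (\<lambda>j. cdf_inv M (v j))"
  shows "nuQ M k v = distr M borel (sorted_atoms.nearest k (\<lambda>j. cdf_inv M (v j)))"
proof -
  interpret atoms: sorted_atoms k "\<lambda>j. cdf_inv M (v j)" by (rule assms)
  have cell_measure: "emeasure M (atoms.cell i) = ennreal (zF M k v (Suc i) - zF M k v i)"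
    if i: "i < k" for i
  proof -
    define R where "R = (if k \<le> Suc i then UNIV else {..atoms.midpoint (Suc i)})"
    define L where "L = (if i = 0 then {} else {..atoms.midpoint i})"
    have "L \<subseteq> R"
    proof
      fix x assume "x \<in> L"
      then show "x \<in> R"
        using atoms.midpoint_mono[of i "Suc i"] by (cases "Suc i < k") (auto simp: L_def R_def split: if_splits)
    qed
    moreover have "atoms.cell i = R - L"
      by (auto simp: atoms.cell_def L_def R_def)
    moreover have "measure M R = zF M k v (Suc i)" and "measure M L = zF M k v i"
      using i prob_space by (simp_all add: R_def L_def zF_def Defs.cdf_def atoms.midpoint_def)
    ultimately show ?thesis
      by (simp add: emeasure_eq_measure finite_measure_Diff R_def L_def)
  qed
  have "point_measure {..<k} (\<lambda>i. emeasure M (atoms.cell i))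
      = point_measure {..<k} (\<lambda>i. ennreal (zF M k v (Suc i) - zF M k v i))"
    unfolding point_measure_def by (intro density_cong) (auto simp: cell_measure)
  then show ?thesis
    by (simp add: nuQ_def atoms.distr_nearest)
qed

locale percentile_setting = density_on_interval +
  fixes k :: nat and v :: "nat \<Rightarrow> real"
  assumes first_moment: "integrable \<mu> abs"
    and k_pos: "k \<ge> 1"
    and v_range: "\<And>j. j < k \<Longrightarrow> 0 < v j \<and> v j < 1"
    and v_sorted: "\<And>i j. i \<le> j \<Longrightarrow> j < k \<Longrightarrow> v i \<le> v j"
begin

abbreviation quantile :: "nat \<Rightarrow> real" where
  "quantile j \<equiv> cdf_inv \<mu> (v j)"

sublocale atoms: sorted_atoms k quantile
  using k_pos v_range v_sorted
  by unfold_locales (auto intro!: cdf_inv_mono intro: le_less_trans)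

lemma sample_quantile: "j < k \<Longrightarrow> sample_quantile \<mu> (v j) (quantile j)"
  using first_moment v_range by (intro sample_quantile_cdf_inv) auto

lemma integrable_min_dist_quantile: "integrable \<mu> (min_dist k quantile)"
  using first_moment k_pos by (intro integrable_min_dist[OF _ sets_\<mu>]) auto

lemma W1_nuQ: "W1 \<mu> (nuQ \<mu> k v) = ennreal (\<integral>a. min_dist k quantile a \<partial>\<mu>)"
proof -
  have "W1 \<mu> (nuQ \<mu> k v) = W1 \<mu> (distr \<mu> borel atoms.nearest)"
    by (simp add: nuQ_eq_distr_nearest atoms.sorted_atoms_axioms)
  also have "\<dots> = (\<integral>\<^sup>+ a. ennreal \<bar>a - atoms.nearest a\<bar> \<partial>\<mu>)"
    by (rule W1_distr_nearest[OF sets_\<mu> _ atoms.borel_measurable_nearest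
          atoms.nearest_in_atoms atoms.abs_sub_nearest_le]) simp
  also have "\<dots> = (\<integral>\<^sup>+ a. ennreal (min_dist k quantile a) \<partial>\<mu>)"
    by (simp add: atoms.abs_sub_nearest_eq_Min min_dist_def)
  also have "\<dots> = ennreal (\<integral>a. min_dist k quantile a \<partial>\<mu>)"
    using integrable_min_dist_quantile min_dist_nonneg atoms.k_pos
    by (intro nn_integral_eq_integral) auto
  finally show ?thesis .
qed

lemma tendsto_nn_integral_SC_pm:
  "(\<lambda>n. \<integral>\<^sup>+ x. ennreal (SC_pm k v n x) \<partial>samples \<mu> n)
     \<longlonglongrightarrow> ennreal (\<integral>a. min_dist k quantile a \<partial>\<mu>)"
  unfolding SC_pm_def
proof (rule tendsto_nn_integral_SC[where y = "\<lambda>n x. PM n v x"])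
  fix j assume "j < k"
  then interpret Q: sample_quantile \<mu> "v j" "quantile j"
    by (rule sample_quantile)
  show "(\<lambda>n. \<integral>x. \<bar>PM n v x j - quantile j\<bar> \<partial>samples \<mu> n) \<longlonglongrightarrow> 0"
    using Q.tendsto_integral_abs_order_stat by (simp add: Q.PM_eq_order_stat)
next
  fix n j :: nat assume n: "n > 0" and j: "j < k"
  interpret Q: sample_quantile \<mu> "v j" "quantile j"
    using j by (rule sample_quantile)
  show "(\<lambda>x. PM n v x j) \<in> borel_measurable (samples \<mu> n)"
    using Q.measurable_order_stat[OF n] by (simp add: Q.PM_eq_order_stat)
  show "integrable (samples \<mu> n) (\<lambda>x. \<bar>PM n v x j - quantile j\<bar>)"
    using Q.integrable_abs_order_stat_sub[OF n order_refl] by (simp add: Q.PM_eq_order_stat)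
qed (use prob sets_\<mu> atoms.k_pos integrable_min_dist_quantile in auto)

end

theorem lemma2:
  fixes \<mu> :: "real measure" and \<rho> :: "real \<Rightarrow> real" and I :: "real set"
    and k :: nat and v :: "nat \<Rightarrow> real"
  assumes prob: "prob_space \<mu>"
    and dens_meas: "\<rho> \<in> borel_measurable borel"
    and dens_nonneg: "\<And>x. \<rho> x \<ge> 0"
    and dens: "\<mu> = density lborel (\<lambda>x. ennreal (\<rho> x))"
    and I_interval: "is_interval I" and I_closed: "closed I"
    and dens_pos: "\<And>x. x \<in> interior I \<Longrightarrow> \<rho> x > 0"
    and dens_zero: "\<And>x. x \<notin> I \<Longrightarrow> \<rho> x = 0"
    and dens_diff: "\<And>x. x \<in> I \<Longrightarrow> \<rho> differentiable (at x within I)"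
    and first_moment: "integrable \<mu> (\<lambda>x. \<bar>x\<bar>)"
    and k_pos: "k \<ge> 1"
    and v_range: "\<And>j. j < k \<Longrightarrow> 0 < v j \<and> v j < 1"
    and v_sorted: "\<And>i j. i \<le> j \<Longrightarrow> j < k \<Longrightarrow> v i \<le> v j"
  shows "(\<lambda>n. \<integral>\<^sup>+ x. ennreal (SC_pm k v n x) \<partial>(PiM {..<n} (\<lambda>_. \<mu>)))
           \<longlonglongrightarrow> W1 \<mu> (nuQ \<mu> k v)"
proof -
  interpret percentile_setting \<mu> \<rho> I k v
    using prob dens_meas dens I_interval dens_pos dens_zero first_moment k_pos v_range v_sorted
    by (intro percentile_setting.intro density_on_interval.intro percentile_setting_axioms.intro) auto
  show ?thesis
    using tendsto_nn_integral_SC_pm by (simp add: W1_nuQ)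
qed

end
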